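(* For any $\alpha\in[0,1/2)$, if a deterministic algorithm for the $\{0,1\}$-speed SSP problem is $(1+\alpha)$-consistent, then its robustness is at least $(4-2\alpha)/3$.
   Context: $\{0,1\}$-speed SSP: there are $n$ jobs with processing times $p_1,\dots,p_n\ge0$ and $m$ machines, each of speed $0$ (unavailable) or $1$ (available). In the partitioning stage the algorithm knows $\mathbf p$, $m$ and a prediction $\hat m$ of the number of available machines, and partitions the jobs into $m$ possibly empty bags. In the scheduling stage the actual number $m_0\ge1$ of available machines is revealed and each bag is assigned whole to one of the $m_0$ identical unit-speed machines; the makespan is the maximum total processing time on a machine. $opt(\mathbf p,x)$ is the minimum makespan of scheduling the individual jobs on $x$ identical unit-speed machines; $alg(\mathbf p,\hat m,m_0)$ is the algorithm's makespan. An algorithm is $c$-consistent if $alg(\mathbf p,m_0,m_0)\le c\cdot opt(\mathbf p,m_0)$ for all $\mathbf p,m_0$; its robustness is $\sup_{\mathbf p,\hat m,m_0} alg(\mathbf p,\hat m,m_0)/opt(\mathbf p,m_0)$. *)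

theory Defs
  imports Complex_Main "HOL-Library.FuncSet" "HOL-Library.Extended_Real"
begin

text \<open>Jobs are a list p of processing times; job j (j < length p) has time p!j.
  Machines, bags are indexed by naturals 0,1,....
  An assignment g maps job indices to machine indices.\<close>

definition load :: "real list \<Rightarrow> (nat \<Rightarrow> nat) \<Rightarrow> nat \<Rightarrow> real" where
  "load p g k = (\<Sum>j\<in>{j. j < length p \<and> g j = k}. p ! j)"

definition makespan :: "real list \<Rightarrow> (nat \<Rightarrow> nat) \<Rightarrow> nat \<Rightarrow> real" where
  "makespan p g x = Max ((\<lambda>k. load p g k) ` {..<x})"

definition opt :: "real list \<Rightarrow> nat \<Rightarrow> real" where
  "opt p x = Min ((\<lambda>g. makespan p g x) ` ({..<length p} \<rightarrow>\<^sub>E {..<x}))"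

text \<open>A deterministic algorithm is given by a partitioning function
  part p m mh : job index \<Rightarrow> bag index (bags 0..m-1)
  and a scheduling function
  sched p m mh m0 : bag index \<Rightarrow> machine index (machines 0..m0-1).\<close>

definition valid_input :: "real list \<Rightarrow> nat \<Rightarrow> nat \<Rightarrow> bool" where
  "valid_input p m mh \<longleftrightarrow> (\<forall>x\<in>set p. 0 \<le> x) \<and> 1 \<le> mh \<and> mh \<le> m"

definition valid_alg ::
  "(real list \<Rightarrow> nat \<Rightarrow> nat \<Rightarrow> nat \<Rightarrow> nat) \<Rightarrow>
   (real list \<Rightarrow> nat \<Rightarrow> nat \<Rightarrow> nat \<Rightarrow> nat \<Rightarrow> nat) \<Rightarrow> bool" where
  "valid_alg part sched \<longleftrightarrow>
     (\<forall>p m mh. valid_input p m mh \<longrightarrow>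
        (\<forall>j < length p. part p m mh j < m) \<and>
        (\<forall>m0. 1 \<le> m0 \<and> m0 \<le> m \<longrightarrow> (\<forall>i < m. sched p m mh m0 i < m0)))"

definition alg ::
  "(real list \<Rightarrow> nat \<Rightarrow> nat \<Rightarrow> nat \<Rightarrow> nat) \<Rightarrow>
   (real list \<Rightarrow> nat \<Rightarrow> nat \<Rightarrow> nat \<Rightarrow> nat \<Rightarrow> nat) \<Rightarrow>
   real list \<Rightarrow> nat \<Rightarrow> nat \<Rightarrow> nat \<Rightarrow> real" where
  "alg part sched p m mh m0 = makespan p (\<lambda>j. sched p m mh m0 (part p m mh j)) m0"

definition consistent ::
  "(real list \<Rightarrow> nat \<Rightarrow> nat \<Rightarrow> nat \<Rightarrow> nat) \<Rightarrow>
   (real list \<Rightarrow> nat \<Rightarrow> nat \<Rightarrow> nat \<Rightarrow> nat \<Rightarrow> nat) \<Rightarrow> real \<Rightarrow> bool" where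
  "consistent part sched c \<longleftrightarrow>
     (\<forall>p m m0. valid_input p m m0 \<longrightarrow> alg part sched p m m0 m0 \<le> c * opt p m0)"

text \<open>Robustness: supremum of alg/opt over all instances (p, m, mh, m0), with 1 \<le> m0 \<le> m.
  (When opt = 0 all jobs are 0 and the ratio 0/0 is taken as 0.)\<close>
definition robustness ::
  "(real list \<Rightarrow> nat \<Rightarrow> nat \<Rightarrow> nat \<Rightarrow> nat) \<Rightarrow>
   (real list \<Rightarrow> nat \<Rightarrow> nat \<Rightarrow> nat \<Rightarrow> nat \<Rightarrow> nat) \<Rightarrow> ereal" where
  "robustness part sched =
     (SUP (p, m, mh, m0) \<in> {(p, m, mh, m0). valid_input p m mh \<and> 1 \<le> m0 \<and> m0 \<le> m}.
        ereal (alg part sched p m mh m0 / opt p m0))"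

end

theory Submission
  imports Defs
begin

(* Take six unit jobs, three bags and the correct prediction of three machines. Consistency
   below 3/2 forces makespan < 3 on three machines, so every bag holds at most two jobs. If only
   two machines turn out to be available, two of the three bags share a machine; since the third
   bag holds at most two jobs, that machine receives at least four, while opt = 3. Hence the
   robustness is at least 4/3 >= (4 - 2 alpha)/3. *)

lemma load_replicate_one:
  "load (replicate n 1) g k = real (card {j. j < n \<and> g j = k})"
  unfolding load_def by (simp add: sum.cong[of _ _ "\<lambda>_. 1"])

lemma load_le_makespan: "k < x \<Longrightarrow> load p g k \<le> makespan p g x"
  unfolding makespan_def by (intro Max_ge) auto

lemma makespan_leI:
  "0 < x \<Longrightarrow> (\<And>k. k < x \<Longrightarrow> load p g k \<le> B) \<Longrightarrow> makespan p g x \<le> B"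
  unfolding makespan_def by (subst Max_le_iff) auto

lemma opt_le_makespan: "g \<in> {..<length p} \<rightarrow>\<^sub>E {..<x} \<Longrightarrow> opt p x \<le> makespan p g x"
  unfolding opt_def by (intro Min_le) (auto intro: finite_PiE)

lemma opt_geI:
  assumes "0 < x" and "\<And>g. g \<in> {..<length p} \<rightarrow>\<^sub>E {..<x} \<Longrightarrow> B \<le> makespan p g x"
  shows "B \<le> opt p x"
proof -
  have "(\<lambda>_\<in>{..<length p}. 0) \<in> {..<length p} \<rightarrow>\<^sub>E {..<x}"
    using assms(1) by auto
  then have "{..<length p} \<rightarrow>\<^sub>E {..<x} \<noteq> {}" by blast
  then show ?thesis
    unfolding opt_def using assms(2) by (subst Min_ge_iff) (auto intro: finite_PiE)
qed

lemma sum_load_eq_sum_list: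
  assumes "\<And>j. j < length p \<Longrightarrow> g j < x"
  shows "(\<Sum>k<x. load p g k) = sum_list p"
proof -
  have "(\<Sum>k<x. load p g k) = (\<Sum>j<length p. p ! j)"
    unfolding load_def using assms
    by (subst sum.group[symmetric, where g = g and T = "{..<x}"]) (auto intro!: sum.cong)
  then show ?thesis by (simp add: sum_list_sum_nth lessThan_atLeast0)
qed

lemma sum_load_le_load_comp:
  assumes "\<And>y. y \<in> set p \<Longrightarrow> 0 \<le> y" and "finite K" and "\<And>k. k \<in> K \<Longrightarrow> h k = c"
  shows "(\<Sum>k\<in>K. load p g k) \<le> load p (\<lambda>j. h (g j)) c"
proof -
  have "(\<Sum>k\<in>K. load p g k) = (\<Sum>j\<in>{j. j < length p \<and> g j \<in> K}. p ! j)"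
    unfolding load_def using assms(2)
    by (subst sum.group[symmetric, where g = g and T = K]) (auto intro!: sum.cong)
  also have "\<dots> \<le> load p (\<lambda>j. h (g j)) c"
    unfolding load_def using assms(1,3) by (intro sum_mono2) auto
  finally show ?thesis .
qed

lemma card_residue_class_le: "card {j. j < q * x \<and> j mod x = k} \<le> q"
proof -
  have "{j. j < q * x \<and> j mod x = k} \<subseteq> (\<lambda>i. i * x + k) ` {..<q}"
  proof
    fix j assume "j \<in> {j. j < q * x \<and> j mod x = k}"
    then have "j = (j div x) * x + k" and "j div x < q"
      by (auto simp: less_mult_imp_div_less)
    then show "j \<in> (\<lambda>i. i * x + k) ` {..<q}" by blast
  qed
  then have "card {j. j < q * x \<and> j mod x = k} \<le> card ((\<lambda>i. i * x + k) ` {..<q})"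
    by (intro card_mono) auto
  also have "\<dots> \<le> q" using card_image_le[of "{..<q}"] by simp
  finally show ?thesis .
qed

lemma opt_replicate_one_le: "0 < x \<Longrightarrow> opt (replicate (q * x) 1) x \<le> q"
proof -
  assume "0 < x"
  let ?g = "\<lambda>j\<in>{..<q * x}. j mod x"
  have g: "?g \<in> {..<length (replicate (q * x) (1::real))} \<rightarrow>\<^sub>E {..<x}"
    using \<open>0 < x\<close> by auto
  have "makespan (replicate (q * x) 1) ?g x \<le> q"
  proof (rule makespan_leI[OF \<open>0 < x\<close>])
    fix k
    have "{j. j < q * x \<and> ?g j = k} = {j. j < q * x \<and> j mod x = k}" by auto
    then show "load (replicate (q * x) 1) ?g k \<le> q"
      using card_residue_class_le[of q x k] by (simp add: load_replicate_one)
  qed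
  then show ?thesis using opt_le_makespan[OF g] by simp
qed

lemma nth_le_opt:
  assumes "\<And>y. y \<in> set p \<Longrightarrow> 0 \<le> y" and "i < length p" and "0 < x"
  shows "p ! i \<le> opt p x"
proof (rule opt_geI[OF \<open>0 < x\<close>])
  fix g assume "g \<in> {..<length p} \<rightarrow>\<^sub>E {..<x}"
  then have "g i < x" using assms(2) by auto
  have "p ! i = (\<Sum>j\<in>{i}. p ! j)" by simp
  also have "\<dots> \<le> load p g (g i)"
    unfolding load_def using assms(1,2) by (intro sum_mono2) auto
  also have "\<dots> \<le> makespan p g x" using \<open>g i < x\<close> by (rule load_le_makespan)
  finally show "p ! i \<le> makespan p g x" .
qed

lemma pair_ge_sum_minus_bound:
  fixes L :: "nat \<Rightarrow> real"
  assumes "\<And>k. k < n \<Longrightarrow> L k \<le> B" and "k1 \<noteq> k2" and "k1 < n" and "k2 < n"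
  shows "(\<Sum>k<n. L k) - real (n - 2) * B \<le> L k1 + L k2"
proof -
  have "(\<Sum>k<n. L k) = (\<Sum>k\<in>{..<n} - {k1, k2}. L k) + (\<Sum>k\<in>{k1, k2}. L k)"
    using assms(3,4) by (intro sum.subset_diff) auto
  also have "(\<Sum>k\<in>{..<n} - {k1, k2}. L k) \<le> real (card ({..<n} - {k1, k2})) * B"
    using assms(1) by (intro sum_bounded_above) auto
  also have "card ({..<n} - {k1, k2}) = n - 2"
    using assms(2-4) by (subst card_Diff_subset) auto
  finally show ?thesis using assms(2) by simp
qed

lemma pigeonhole_lessThan:
  fixes f :: "nat \<Rightarrow> nat"
  assumes "\<And>i. i < n \<Longrightarrow> f i < n'" and "n' < n"
  obtains i j where "i < n" and "j < n" and "i \<noteq> j" and "f i = f j"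
proof -
  have "card (f ` {..<n}) \<le> card {..<n'}"
    using assms(1) by (intro card_mono) auto
  then have "\<not> inj_on f {..<n}"
    using assms(2) by (intro pigeonhole) simp
  then show ?thesis using that unfolding inj_on_def by blast
qed

lemma valid_algD:
  assumes "valid_alg part sched" and "valid_input p m mh"
  shows "j < length p \<Longrightarrow> part p m mh j < m"
    and "1 \<le> m0 \<Longrightarrow> m0 \<le> m \<Longrightarrow> i < m \<Longrightarrow> sched p m mh m0 i < m0"
  using assms unfolding valid_alg_def by blast+

lemma sum_bag_loads_le_alg:
  assumes "valid_alg part sched" and "valid_input p m mh" and "1 \<le> m0" and "m0 \<le> m"
    and "K \<subseteq> {..<m}" and "k0 \<in> K" and "\<And>k. k \<in> K \<Longrightarrow> sched p m mh m0 k = sched p m mh m0 k0"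
  shows "(\<Sum>k\<in>K. load p (part p m mh) k) \<le> alg part sched p m mh m0"
proof -
  have nonneg: "\<And>y. y \<in> set p \<Longrightarrow> 0 \<le> y"
    using assms(2) by (simp add: valid_input_def)
  have "sched p m mh m0 k0 < m0"
    using valid_algD(2)[OF assms(1-4)] assms(5,6) by blast
  moreover have "(\<Sum>k\<in>K. load p (part p m mh) k)
      \<le> load p (\<lambda>j. sched p m mh m0 (part p m mh j)) (sched p m mh m0 k0)"
    using sum_load_le_load_comp[OF nonneg finite_subset[OF assms(5) finite_lessThan] assms(7)] .
  ultimately show ?thesis
    unfolding alg_def using load_le_makespan order_trans by blast
qed

lemma ratio_le_robustness:
  assumes "valid_input p m mh" and "1 \<le> m0" and "m0 \<le> m"
  shows "ereal (alg part sched p m mh m0 / opt p m0) \<le> robustness part sched"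
  unfolding robustness_def using assms by (intro SUP_upper2[of "(p, m, mh, m0)"]) auto

lemma consistent_bag_load_le:
  fixes c :: real
  assumes "valid_alg part sched" and "consistent part sched c" and "0 \<le> c" and "c * q < q + 1"
    and "0 < m" and "k < m"
  shows "load (replicate (q * m) 1) (part (replicate (q * m) 1) m m) k \<le> q"
proof -
  let ?p = "replicate (q * m) (1::real)"
  have p: "valid_input ?p m m" using assms(5) by (simp add: valid_input_def)
  have "load ?p (part ?p m m) k \<le> alg part sched ?p m m m"
    using sum_bag_loads_le_alg[OF assms(1) p, of m "{k}" k] assms(5,6) by simp
  also have "\<dots> \<le> c * opt ?p m"
    using assms(2) p unfolding consistent_def by blast
  also have "\<dots> \<le> c * q"
    using opt_replicate_one_le[OF assms(5)] assms(3) by (intro mult_left_mono)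
  finally have "card {j. j < q * m \<and> part ?p m m j = k} < q + 1"
    using assms(4) unfolding load_replicate_one by linarith
  then show ?thesis unfolding load_replicate_one by simp
qed

lemma alg_one_machine_less_ge:
  assumes "valid_alg part sched" and "valid_input p m mh" and "2 \<le> m"
    and "\<And>k. k < m \<Longrightarrow> load p (part p m mh) k \<le> B"
  shows "sum_list p - real (m - 2) * B \<le> alg part sched p m mh (m - 1)"
proof -
  have "sched p m mh (m - 1) k < m - 1" if "k < m" for k
    using valid_algD(2)[OF assms(1,2) _ _ that] assms(3) by simp
  then obtain k1 k2
    where k: "k1 < m" "k2 < m" "k1 \<noteq> k2" "sched p m mh (m - 1) k1 = sched p m mh (m - 1) k2"
    by (rule pigeonhole_lessThan) (use assms(3) in auto)
  have "sum_list p = (\<Sum>k<m. load p (part p m mh) k)"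
    using valid_algD(1)[OF assms(1,2)] by (rule sum_load_eq_sum_list[symmetric])
  then have "sum_list p - real (m - 2) * B \<le> load p (part p m mh) k1 + load p (part p m mh) k2"
    using pair_ge_sum_minus_bound[OF assms(4) k(3,1,2)] by simp
  also have "\<dots> = (\<Sum>k\<in>{k1, k2}. load p (part p m mh) k)"
    using k(3) by simp
  also have "\<dots> \<le> alg part sched p m mh (m - 1)"
    by (rule sum_bag_loads_le_alg[OF assms(1,2)]) (use assms(3) k in auto)
  finally show ?thesis .
qed

theorem theorem6:
  fixes \<alpha> :: real
    and part :: "real list \<Rightarrow> nat \<Rightarrow> nat \<Rightarrow> nat \<Rightarrow> nat"
    and sched :: "real list \<Rightarrow> nat \<Rightarrow> nat \<Rightarrow> nat \<Rightarrow> nat \<Rightarrow> nat"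
  assumes "0 \<le> \<alpha>" and "\<alpha> < 1/2"
    and "valid_alg part sched"
    and "consistent part sched (1 + \<alpha>)"
  shows "robustness part sched \<ge> ereal ((4 - 2 * \<alpha>) / 3)"
proof -
  define p where "p = replicate (2 * 3) (1::real)"
  have p: "valid_input p 3 3" by (simp add: valid_input_def p_def)
  have "load p (part p 3 3) k \<le> 2" if "k < 3" for k
    using consistent_bag_load_le[OF assms(3,4), of 2 3 k] assms(1,2) that by (simp add: p_def)
  then have "sum_list p - 1 * 2 \<le> alg part sched p 3 3 2"
    using alg_one_machine_less_ge[OF assms(3) p, of 2] by simp
  then have alg_ge_four: "4 \<le> alg part sched p 3 3 2" by (simp add: p_def sum_list_replicate)
  have opt_ge_one: "1 \<le> opt p 2" using nth_le_opt[of p 0 2] by (simp add: p_def)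
  have opt_le_three: "opt p 2 \<le> 3" using opt_replicate_one_le[of 2 3] by (simp add: p_def)
  have "ereal ((4 - 2 * \<alpha>) / 3) \<le> ereal (4 / 3)" using assms(1) by simp
  also have "\<dots> \<le> ereal (alg part sched p 3 3 2 / opt p 2)"
    using alg_ge_four opt_ge_one opt_le_three by (simp add: field_simps)
  also have "\<dots> \<le> robustness part sched"
    by (rule ratio_le_robustness[OF p]) simp_all
  finally show ?thesis .
qed

end
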